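(* For every $\mathbf b_j\in\mathcal B_k$, \[F^{(\mathbf b_j)}_{\mathbf b_i}(\lambda)=\lambda^{s_0^{(j)}}\sum_{s=0}^\infty\frac{\prod_{r=1}^m\prod_{\sigma=0}^{\ell_r-1}\big(\frac{v^{(i)}_r+\sigma}{\ell_r}+\frac{s_0^{(j)}}{\ell_0}\big)_s}{\prod_{t=1}^{\ell_0}\big(\frac{t}{\ell_0}+\frac{s_0^{(j)}}{\ell_0}\big)_s}\lambda^{s\ell_0};\] that is, $F^{(\mathbf b_j)}_{\mathbf b_i}(\lambda)$ is obtained from the series $F^{(\mathbf b_i)}_{\mathbf b_i}(\lambda)=\sum_{s\ge0}\frac{\prod_r\prod_\sigma((v^{(i)}_r+\sigma)/\ell_r)_s}{\prod_{t=1}^{\ell_0}(t/\ell_0)_s}\lambda^{s\ell_0}$ by multiplying by $\lambda^{s_0^{(j)}}$ and adding $s_0^{(j)}/\ell_0$ to each Pochhammer parameter. In particular $\frac{v^{(i)}_r}{\ell_r}+\frac{s_0^{(j)}}{\ell_0}=\frac{v^{(j)}_r-s^{(j)}_r}{\ell_r}$ for $r=1,\dots,m$.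
   Context: Let $A=\{\mathbf a_1,\dots,\mathbf a_m\}\subseteq\mathbb Z^n$ be linearly independent over $\mathbb R$, $\mathbf a_0\in\mathbb Z^n$, and $\ell_0,\dots,\ell_m$ positive integers with gcd $1$, $\ell_0\mathbf a_0=\sum_{j=1}^m\ell_j\mathbf a_j$, $\ell_0=\sum_{j=1}^m\ell_j$. Let $\mathbb ZA$, $\mathbb ZA_+$ be the groups generated by $A$ and $A\cup\{\mathbf a_0\}$. Let $V$ be the real span of $A$, $V_{\mathbb Z}=V\cap\mathbb Z^n$, $P(A)=\{\sum_jc_j\mathbf a_j:0\le c_j<1\}$, $\mathcal B=V_{\mathbb Z}\cap P(A)$. Fix a coset $\mathcal C_k$ of $\mathbb ZA_+$ in $V_{\mathbb Z}$ and put $\mathcal B_k=\mathcal B\cap\mathcal C_k$. Fix $\mathbf b_i\in\mathcal B_k$. For $\mathbf b_j\in\mathcal B_k$ write $\mathbf b_j=\sum_rv^{(j)}_r\mathbf a_r$ with $v^{(j)}_r\in[0,1)$, let $s_0^{(j)}\in\{0,\dots,\ell_0-1\}$ be the unique element with $\mathbf b_i+s_0^{(j)}\mathbf a_0\equiv\mathbf b_j\pmod{\mathbb ZA}$, and let $s^{(j)}_r\in\mathbb Z$ be determined by $\mathbf b_i+s_0^{(j)}\mathbf a_0=\mathbf b_j-\sum_rs^{(j)}_r\mathbf a_r$ (so $s^{(i)}_r=0$ for $r=0,\dots,m$). Define \[F^{(\mathbf b_j)}_{\mathbf b_i}(\lambda)=\lambda^{s_0^{(j)}}\sum_{s=0}^\infty\frac{\prod_{r=1}^m\prod_{\sigma=0}^{\ell_r-1}\big(\frac{v^{(j)}_r-s^{(j)}_r+\sigma}{\ell_r}\big)_s}{\prod_{t=1}^{\ell_0}\big(\frac{s^{(j)}_0+t}{\ell_0}\big)_s}\lambda^{s\ell_0},\]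 with $(a)_s=a(a+1)\cdots(a+s-1)$. *)

theory Defs
  imports "HOL-Analysis.Analysis"
begin

text \<open>Integer vectors in Z^n are modelled as int^'n; rvec embeds them into R^n.\<close>

definition rvec :: "int^'n \<Rightarrow> real^'n" where
  "rvec x = (\<chi> k. real_of_int (x $ k))"

definition ZA :: "(nat \<Rightarrow> int^'n) \<Rightarrow> nat set \<Rightarrow> (int^'n) set" where
  "ZA a I = {(\<Sum>r\<in>I. k r *s a r) | k. True}"

definition VZ :: "(nat \<Rightarrow> int^'n) \<Rightarrow> nat \<Rightarrow> (int^'n) set" where
  "VZ a m = {x. rvec x \<in> span (rvec ` a ` {1..m})}"

definition PA :: "(nat \<Rightarrow> int^'n) \<Rightarrow> nat \<Rightarrow> (real^'n) set" where
  "PA a m = {y. \<exists>c. (\<forall>r\<in>{1..m}. 0 \<le> c r \<and> c r < 1) \<and>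
                     y = (\<Sum>r=1..m. c r *\<^sub>R rvec (a r))}"

definition Bset :: "(nat \<Rightarrow> int^'n) \<Rightarrow> nat \<Rightarrow> (int^'n) set" where
  "Bset a m = {x \<in> VZ a m. rvec x \<in> PA a m}"

text \<open>B_k = B \<inter> C_k, where C_k = c + Z A_+ is a coset of Z A_+ in V_Z.\<close>
definition Bk :: "(nat \<Rightarrow> int^'n) \<Rightarrow> nat \<Rightarrow> int^'n \<Rightarrow> (int^'n) set" where
  "Bk a m c = Bset a m \<inter> {c + z | z. z \<in> ZA a {0..m}}"

text \<open>The series F^{(b_j)}_{b_i}(lambda) as defined in the paper, given the data
  v^{(j)}_r (vj), s^{(j)}_r (sj) and s_0^{(j)} (s0).\<close>
definition Fser :: "nat \<Rightarrow> (nat \<Rightarrow> nat) \<Rightarrow> (nat \<Rightarrow> real) \<Rightarrow> (nat \<Rightarrow> int) \<Rightarrow> nat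
                     \<Rightarrow> complex \<Rightarrow> complex" where
  "Fser m l vj sj s0 z = z ^ s0 *
     (\<Sum>s. complex_of_real
        ((\<Prod>r=1..m. \<Prod>\<sigma><l r. pochhammer ((vj r - of_int (sj r) + real \<sigma>) / real (l r)) s)
         / (\<Prod>t=1..l 0. pochhammer ((real s0 + real t) / real (l 0)) s))
        * z ^ (s * l 0))"

end

theory Submission
  imports Defs
begin

text \<open>Mapping the defining relation of the s_r^(j) to R^n and
  expanding a_0 = sum_r (l_r / l_0) a_r, uniqueness of coordinates with respect to the independent
  a_1, ..., a_m gives v_r^(j) - s_r^(j) = v_r^(i) + s_0 l_r / l_0. Dividing by l_r turns every
  Pochhammer parameter of the series into the shifted one.\<close>

lemma rvec_add: "rvec (x + y) = rvec x + rvec y"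
  by (simp add: rvec_def vec_eq_iff)

lemma rvec_diff: "rvec (x - y) = rvec x - rvec y"
  by (simp add: rvec_def vec_eq_iff)

lemma rvec_scaleR: "rvec (k *s x) = real_of_int k *\<^sub>R rvec x"
  by (simp add: rvec_def vec_eq_iff)

lemma rvec_0: "rvec 0 = 0"
  by (simp add: rvec_def vec_eq_iff)

lemma rvec_sum: "rvec (\<Sum>r\<in>I. f r) = (\<Sum>r\<in>I. rvec (f r))"
  by (induction I rule: infinite_finite_induct) (simp_all add: rvec_0 rvec_add)

lemma independent_family_coeff_zero:
  fixes f :: "'i \<Rightarrow> 'a::real_vector"
  assumes "finite I" "inj_on f I" "independent (f ` I)"
    and "(\<Sum>i\<in>I. d i *\<^sub>R f i) = 0" "i \<in> I"
  shows "d i = 0"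
proof -
  define u where "u v = d (the_inv_into I f v)" for v
  have u_f: "u (f j) = d j" if "j \<in> I" for j
    using the_inv_into_f_f[OF \<open>inj_on f I\<close> that] by (simp add: u_def)
  have "(\<Sum>v\<in>f ` I. u v *\<^sub>R v) = (\<Sum>j\<in>I. d j *\<^sub>R f j)"
    by (simp add: sum.reindex[OF \<open>inj_on f I\<close>] u_f)
  then have "u (f i) = 0"
    using assms by (intro real_vector.independentD[of "f ` I"]) auto
  then show ?thesis
    using u_f[OF \<open>i \<in> I\<close>] by simp
qed

lemma independent_family_coeff_unique:
  fixes f :: "'i \<Rightarrow> 'a::real_vector"
  assumes "finite I" "inj_on f I" "independent (f ` I)"
    and "(\<Sum>i\<in>I. c i *\<^sub>R f i) = (\<Sum>i\<in>I. d i *\<^sub>R f i)" "i \<in> I"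
  shows "c i = d i"
proof -
  have "(\<Sum>i\<in>I. (c i - d i) *\<^sub>R f i) = 0"
    using assms(4) by (simp add: scaleR_diff_left sum_subtractf)
  from independent_family_coeff_zero[OF assms(1-3) this assms(5)] show ?thesis
    by simp
qed

lemma coords_add_scaleR_combination:
  fixes f :: "'i \<Rightarrow> 'a::real_vector"
  assumes "finite I" "inj_on f I" "independent (f ` I)"
    and x: "x = (\<Sum>i\<in>I. v i *\<^sub>R f i)"
    and y: "y = (\<Sum>i\<in>I. w i *\<^sub>R f i)"
    and rel: "q *\<^sub>R b = (\<Sum>i\<in>I. p i *\<^sub>R f i)" "q \<noteq> 0"
    and "x + t *\<^sub>R b = y" "i \<in> I"
  shows "w i = v i + t * p i / q"
proof (rule sym, rule independent_family_coeff_unique[OF assms(1-3) _ \<open>i \<in> I\<close>])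
  have "t *\<^sub>R b = (t / q) *\<^sub>R (q *\<^sub>R b)"
    using \<open>q \<noteq> 0\<close> by simp
  also have "\<dots> = (\<Sum>i\<in>I. (t * p i / q) *\<^sub>R f i)"
    by (simp add: rel scaleR_sum_right)
  finally show "(\<Sum>i\<in>I. (v i + t * p i / q) *\<^sub>R f i) = (\<Sum>i\<in>I. w i *\<^sub>R f i)"
    using x y \<open>x + t *\<^sub>R b = y\<close> by (simp add: scaleR_add_left sum.distrib)
qed

lemma Fser_eq_shifted_params:
  assumes "\<And>r. r \<in> {1..m} \<Longrightarrow>
      (vj r - of_int (sj r)) / real (l r) = vi r / real (l r) + real s0 / real (l 0)"
  shows "Fser m l vj sj s0 z = z ^ s0 *
            (\<Sum>s. complex_of_real
               ((\<Prod>r=1..m. \<Prod>\<sigma><l r.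
                   pochhammer ((vi r + real \<sigma>) / real (l r) + real s0 / real (l 0)) s)
                / (\<Prod>t=1..l 0. pochhammer (real t / real (l 0) + real s0 / real (l 0)) s))
               * z ^ (s * l 0))"
proof -
  have params: "(\<Prod>r=1..m. \<Prod>\<sigma><l r. pochhammer ((vj r - of_int (sj r) + real \<sigma>) / real (l r)) s)
      = (\<Prod>r=1..m. \<Prod>\<sigma><l r. pochhammer ((vi r + real \<sigma>) / real (l r) + real s0 / real (l 0)) s)"
    for s
  proof (intro prod.cong refl)
    fix r \<sigma> assume "r \<in> {1..m}"
    then show "pochhammer ((vj r - of_int (sj r) + real \<sigma>) / real (l r)) s
        = pochhammer ((vi r + real \<sigma>) / real (l r) + real s0 / real (l 0)) s"
      by (simp add: add_divide_distrib assms ac_simps)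
  qed
  have "(real s0 + real t) / real (l 0) = real t / real (l 0) + real s0 / real (l 0)" for t
    by (simp add: add_divide_distrib)
  then show ?thesis
    unfolding Fser_def params by simp
qed

theorem proposition6p9:
  fixes a :: "nat \<Rightarrow> int^'n" and m :: nat and l :: "nat \<Rightarrow> nat"
    and c bi bj :: "int^'n" and vi vj :: "nat \<Rightarrow> real" and s0 :: nat and sj :: "nat \<Rightarrow> int"
  assumes indep_inj: "inj_on (rvec \<circ> a) {1..m}"
    and indep: "independent (rvec ` a ` {1..m})"
    and l_pos: "\<forall>r\<in>{0..m}. 0 < l r"
    and l_gcd: "Gcd (l ` {0..m}) = 1"
    and rel: "int (l 0) *s a 0 = (\<Sum>r=1..m. int (l r) *s a r)"
    and l0: "l 0 = (\<Sum>r=1..m. l r)"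
    and coset: "c \<in> VZ a m"
    and bi: "bi \<in> Bk a m c" and bj: "bj \<in> Bk a m c"
    and vi_range: "\<forall>r\<in>{1..m}. 0 \<le> vi r \<and> vi r < 1"
    and vi: "rvec bi = (\<Sum>r=1..m. vi r *\<^sub>R rvec (a r))"
    and vj_range: "\<forall>r\<in>{1..m}. 0 \<le> vj r \<and> vj r < 1"
    and vj: "rvec bj = (\<Sum>r=1..m. vj r *\<^sub>R rvec (a r))"
    and s0_lt: "s0 < l 0"
    and s0_cong: "bi + int s0 *s a 0 - bj \<in> ZA a {1..m}"
    and sj: "bi + int s0 *s a 0 = bj - (\<Sum>r=1..m. sj r *s a r)"
  shows "(\<forall>z::complex. Fser m l vj sj s0 z = z ^ s0 *
            (\<Sum>s. complex_of_real
               ((\<Prod>r=1..m. \<Prod>\<sigma><l r.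
                   pochhammer ((vi r + real \<sigma>) / real (l r) + real s0 / real (l 0)) s)
                / (\<Prod>t=1..l 0. pochhammer (real t / real (l 0) + real s0 / real (l 0)) s))
               * z ^ (s * l 0)))
       \<and> (\<forall>r\<in>{1..m}. vi r / real (l r) + real s0 / real (l 0) = (vj r - of_int (sj r)) / real (l r))"
proof -
  have indep': "independent ((rvec \<circ> a) ` {1..m})"
    using indep by (simp add: image_comp)
  have coords: "vj r - sj r = vi r + real s0 * l r / l 0" if "r \<in> {1..m}" for r
  proof (rule coords_add_scaleR_combination[OF _ indep_inj indep' _ _ _ _ _ that])
    show "rvec bi = (\<Sum>r=1..m. vi r *\<^sub>R (rvec \<circ> a) r)"
      using vi by simp
    show "rvec bj - (\<Sum>r=1..m. sj r *\<^sub>R rvec (a r)) = (\<Sum>r=1..m. (vj r - sj r) *\<^sub>R (rvec \<circ> a) r)"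
      using vj by (simp add: scaleR_diff_left sum_subtractf)
    show "real (l 0) *\<^sub>R rvec (a 0) = (\<Sum>r=1..m. real (l r) *\<^sub>R (rvec \<circ> a) r)"
      using arg_cong[OF rel, of rvec] by (simp add: rvec_scaleR rvec_sum)
    show "rvec bi + real s0 *\<^sub>R rvec (a 0) = rvec bj - (\<Sum>r=1..m. sj r *\<^sub>R rvec (a r))"
      using arg_cong[OF sj, of rvec] by (simp add: rvec_scaleR rvec_sum rvec_add rvec_diff)
  qed (use l_pos in auto)
  have shift: "(vj r - sj r) / l r = vi r / l r + s0 / l 0" if "r \<in> {1..m}" for r
  proof -
    have "real (l r) \<noteq> 0"
      using l_pos that by auto
    then show ?thesis
      by (simp add: coords[OF that] add_divide_distrib)
  qed
  then show ?thesis
    using Fser_eq_shifted_params by simp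
qed

end
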